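(* Let $U=[N]$, let $\ell$ be a positive integer dividing $N$, let $\mathcal{S}=\{S_1,\dots,S_m\}$ be a collection of subsets of $U$ each of size $N/\ell$, and let $\varepsilon>0$ satisfy $\varepsilon\le 0.06$ and $\varepsilon\ge \frac1e-\left(1-\frac1\ell\right)^\ell$. Let $I_{\mathrm{rp}}$ be the $k$-RP instance with $k=\ell$, point set $\mathcal{X}=U\cup\mathcal{S}$ (an element point for each $u\in U$ and a set point for each $S\in\mathcal{S}$), distance $d(u,S)=1$ if $u\in S$ and $d(u,S)=2-\varepsilon$ if $u\notin S$ for $u\in U$, $S\in\mathcal{S}$; $d(u_1,u_2)=2$ for distinct $u_1,u_2\in U$; $d(S_1,S_2)=1$ for distinct set points; and $P$ uniform over the element points $U$. Suppose that any $\ell$ sets from $\mathcal{S}$ cover at most a $1-1/e+\varepsilon$ fraction of the elements of $U$ (a partial covering instance). Then every $k$-RP solution for $I_{\mathrm{rp}}$ consisting of $k$ set points (repetitions allowed) has cost at least $k\cdot\left(1+e^{-1+2/e}-e^{-1}-3(1+1/e)\varepsilon\right)$.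
   Context: For a finite metric space $(\mathcal{X},d)$, $\mathcal{X}_k$ is the set of multisets of exactly $k$ points of $\mathcal{X}$; for $A,B\in\mathcal{X}_k$, $d_k(A,B)$ is the minimum, over perfect matchings between the elements of $A$ and of $B$ (with multiplicity), of the sum of the distances of matched pairs; $P_k$ is the distribution of $k$ points drawn i.i.d. from $P$. A $k$-RP solution is a $K\in\mathcal{X}_k$, and its cost is $\mathbb{E}_{L\sim P_k}[d_k(K,L)]$. *)

theory Defs
  imports "HOL-Analysis.Analysis" "HOL-Library.Multiset"
begin

text \<open>Points of the k-RP instance: element points Elem u (u in U = {0..<N})
  and set points SetP i (the i-th set S i, i < m).\<close>
datatype rp_point = Elem nat | SetP nat

fun rp_dist :: "(nat \<Rightarrow> nat set) \<Rightarrow> real \<Rightarrow> rp_point \<Rightarrow> rp_point \<Rightarrow> real" where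
  "rp_dist S \<epsilon> (Elem u) (Elem v) = (if u = v then 0 else 2)"
| "rp_dist S \<epsilon> (SetP i) (SetP j) = (if i = j then 0 else 1)"
| "rp_dist S \<epsilon> (Elem u) (SetP i) = (if u \<in> S i then 1 else 2 - \<epsilon>)"
| "rp_dist S \<epsilon> (SetP i) (Elem u) = (if u \<in> S i then 1 else 2 - \<epsilon>)"

text \<open>A perfect matching is
  represented by two lists enumerating A and B, matched position-wise.\<close>
definition dk :: "('p \<Rightarrow> 'p \<Rightarrow> real) \<Rightarrow> 'p multiset \<Rightarrow> 'p multiset \<Rightarrow> real" where
  "dk d A B = Min {sum_list (map2 d xs ys) | xs ys. mset xs = A \<and> mset ys = B}"

text \<open>Cost of a k-RP solution K: expectation of d_k(K,L) for L consisting of k points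
  drawn i.i.d. uniformly from the element points U = {0..<N}.\<close>
definition rp_cost :: "(nat \<Rightarrow> nat set) \<Rightarrow> real \<Rightarrow> nat \<Rightarrow> nat \<Rightarrow> rp_point multiset \<Rightarrow> real" where
  "rp_cost S \<epsilon> N k K =
     (\<Sum>xs\<in>{xs. set xs \<subseteq> {..<N} \<and> length xs = k}.
        dk (rp_dist S \<epsilon>) K (mset (map Elem xs))) / real N ^ k"

end

(*
  Write a solution as K = {S_f(0), ..., S_f(l-1)}. In a perfect matching of K with l sampled
  elements every pair costs 2 - eps, except that a pair (S, u) with u in S saves 1 - eps.
  Charging each saving either to an element covered at least twice by K, or to the unique set
  of K covering it, bounds the expected cost from below by

    l (2 - eps) - (1 - eps) (sum_j Pr[the sample meets U_j] + l d),

  where U_j is the part of S_f(j) covered by no other set of K and d is the fraction of elements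
  covered at least twice. As eps >= 1/e - (1 - 1/l)^l, the hitting probability
  1 - (1 - |U_j|/N)^l is at most 1 - exp(-l |U_j|/N) + eps, and exp is bounded by a tangent line.
  With p the fraction of elements covered exactly once, the sets of K have total size N, so
  p + 2d <= 1, and the partial covering hypothesis gives p + d <= 1 - 1/e + eps; these two
  linear constraints yield the bound.
*)

theory Submission
  imports Defs "HOL-Combinatorics.Multiset_Permutations"
begin

lemma exp_minus_le_power:
  fixes t :: real
  assumes "0 \<le> t" "t \<le> 1" "l > 0"
  shows "exp (-t) \<le> (1 - t / l) ^ (l - 1)"
proof (cases "l = 1")
  case True
  then show ?thesis using assms by simp
next
  case False
  define s where "s = t / l"
  have "real l \<ge> 2" using assms False by simp
  then have s: "0 \<le> s" "s < 1" using assms by (auto simp: s_def field_simps)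
  have "1 / (1 - s) = 1 + s / (1 - s)" using s by (simp add: field_simps)
  also have "\<dots> \<le> exp (s / (1 - s))" by (rule exp_ge_add_one_self)
  finally have "exp (- (s / (1 - s))) \<le> 1 - s"
    using s by (simp add: exp_minus field_simps)
  have "real (l - 1) * (s / (1 - s)) \<le> t"
  proof -
    have "t * t * real l \<le> t * real l"
      using assms by (intro mult_right_mono) (auto simp: mult_left_le_one_le)
    then have "(real l - 1) * s \<le> t * (1 - s)" using assms by (simp add: s_def field_simps)
    then show ?thesis using assms s by (simp add: of_nat_diff field_simps)
  qed
  then have "exp (-t) \<le> exp (real (l - 1) * (- (s / (1 - s))))" by simp
  also have "\<dots> = exp (- (s / (1 - s))) ^ (l - 1)" by (rule exp_of_nat_mult)
  also have "\<dots> \<le> (1 - s) ^ (l - 1)"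
    by (rule power_mono) (use \<open>exp (- (s / (1 - s))) \<le> 1 - s\<close> in simp_all)
  finally show ?thesis unfolding s_def .
qed

lemma exp_minus_sub_power_le:
  fixes x :: real
  assumes "0 \<le> x" "x \<le> 1" "l > 0"
  shows "exp (-x) - (1 - x / l) ^ l \<le> exp (-1) - (1 - 1 / l) ^ l"
proof (rule deriv_nonneg_imp_mono[of x 1 "\<lambda>t. exp (-t) - (1 - t / l) ^ l"
      "\<lambda>t. (1 - t / l) ^ (l - 1) - exp (-t)"])
  fix t assume t: "t \<in> {x..1}"
  show "((\<lambda>t. exp (-t) - (1 - t / l) ^ l) has_real_derivative (1 - t / l) ^ (l - 1) - exp (-t)) (at t)"
    using assms by (auto intro!: derivative_eq_intros)
  show "0 \<le> (1 - t / l) ^ (l - 1) - exp (-t)"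
    using exp_minus_le_power[of t l] assms t by auto
qed (use assms in auto)

lemma exp_minus_ge_tangent:
  fixes x x\<^sub>0 :: real
  shows "exp (-x\<^sub>0) * (1 + x\<^sub>0 - x) \<le> exp (-x)"
proof -
  have "exp (-x\<^sub>0) * (1 + x\<^sub>0 - x) \<le> exp (-x\<^sub>0) * exp (x\<^sub>0 - x)"
    using exp_ge_add_one_self[of "x\<^sub>0 - x"] by (intro mult_left_mono) (linarith, simp)
  then show ?thesis by (simp add: exp_add[symmetric])
qed

lemma one_minus_power_le_tangent:
  fixes x x\<^sub>0 \<epsilon> :: real
  assumes "0 \<le> x" "x \<le> 1" "l > 0" "exp (-1) - (1 - 1 / l) ^ l \<le> \<epsilon>"
  shows "1 - (1 - x / l) ^ l \<le> 1 - exp (-x\<^sub>0) * (1 + x\<^sub>0 - x) + \<epsilon>"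
  using exp_minus_sub_power_le[OF assms(1-3)] exp_minus_ge_tangent[of x\<^sub>0 x] assms(4) by linarith

lemma cost_bound_from_coverage:
  fixes \<epsilon> p d s L :: real
  defines "x\<^sub>0 \<equiv> 1 - 2 * exp (-1) + 2 * \<epsilon>"
  assumes "0 \<le> L" "0 < \<epsilon>" "\<epsilon> \<le> 0.06" "p + 2 * d \<le> 1" "p + d \<le> 1 - exp (-1) + \<epsilon>"
    and "s \<le> L * (1 - exp (-x\<^sub>0) * (1 + x\<^sub>0) + \<epsilon> + exp (-x\<^sub>0) * p)"
  shows "L * (1 + exp (-1 + 2 / exp 1) - exp (-1) - 3 * (1 + 1 / exp 1) * \<epsilon>)
         \<le> L * (2 - \<epsilon>) - (1 - \<epsilon>) * s - (1 - \<epsilon>) * (L * d)"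
proof -
  define b w a where "b = exp (-1 :: real)" and "w = exp (-x\<^sub>0)" and "a = exp (-1 + 2 * b)"
  have b: "1/3 \<le> b" "b \<le> 1/2" "1 / exp 1 = b"
    using exp_le exp_ge_add_one_self[of 1] by (auto simp: b_def exp_minus field_simps)
  have "0 \<le> x\<^sub>0" "x\<^sub>0 \<le> 1/2" using b assms(3,4) by (auto simp: x\<^sub>0_def b_def)
  then have w: "1/2 \<le> w" "w \<le> 1"
    using exp_ge_add_one_self[of "-x\<^sub>0"] by (auto simp: w_def)
  \<comment> \<open>x0 is chosen so that 1 + x0 = 2 (1 - 1/e + eps): then the linear term w p + d
    splits into the two coverage constraints with the nonnegative weights 2 w - 1 and 1 - w.\<close>
  have "w * p + d = (2 * w - 1) * (p + d) + (1 - w) * (p + 2 * d)" by algebra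
  also have "\<dots> \<le> (2 * w - 1) * (1 - b + \<epsilon>) + (1 - w) * 1"
    using w assms(5,6) unfolding b_def by (intro add_mono[OF mult_left_mono mult_left_mono]) auto
  finally have per_element: "1 - w * (1 + x\<^sub>0) + \<epsilon> + w * p + d \<le> 1 + b - w"
    by (simp add: x\<^sub>0_def b_def algebra_simps)
  have "w = a * exp (-2 * \<epsilon>)" by (simp add: w_def a_def x\<^sub>0_def b_def flip: exp_add)
  then have "a * (1 - 2 * \<epsilon>) \<le> w"
    using exp_ge_add_one_self[of "-2 * \<epsilon>"] by (auto intro!: mult_left_mono simp: a_def)
  moreover have "a * \<epsilon> \<le> \<epsilon>" "0 \<le> b * \<epsilon>"
    using b assms(3) by (simp_all add: a_def b_def mult_left_le_one_le)
  moreover have "exp (-1 + 2 / exp 1) = a" using b(3) by (simp add: a_def)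
  moreover have "3 * (1 + 1 / exp 1) * \<epsilon> = 3 * \<epsilon> + 3 * (b * \<epsilon>)"
    and "a * (1 - 2 * \<epsilon>) = a - 2 * (a * \<epsilon>)"
    using b(3) by (simp_all add: algebra_simps)
  ultimately have "1 + exp (-1 + 2 / exp 1) - exp (-1) - 3 * (1 + 1 / exp 1) * \<epsilon> \<le> (2 - \<epsilon>) - (1 + b - w)"
    unfolding b_def by linarith
  then have "L * (1 + exp (-1 + 2 / exp 1) - exp (-1) - 3 * (1 + 1 / exp 1) * \<epsilon>) \<le> L * (2 - \<epsilon>) - L * (1 + b - w)"
    using assms(2) by (simp add: mult_left_mono flip: right_diff_distrib)
  moreover have "(1 - \<epsilon>) * s + (1 - \<epsilon>) * (L * d) \<le> L * (1 + b - w)"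
  proof -
    have "s + L * d \<le> L * (1 - w * (1 + x\<^sub>0) + \<epsilon> + w * p + d)"
      using assms(7) by (simp add: w_def algebra_simps)
    also have "\<dots> \<le> L * (1 + b - w)"
      using per_element assms(2) by (rule mult_left_mono)
    finally have "(1 - \<epsilon>) * (s + L * d) \<le> (1 - \<epsilon>) * (L * (1 + b - w))"
      using assms(4) by (intro mult_left_mono) auto
    also have "\<dots> \<le> L * (1 + b - w)"
      using mult_nonneg_nonneg[of \<epsilon> "L * (1 + b - w)"] assms(2,3) b w
      by (simp add: left_diff_distrib)
    finally show ?thesis by (simp add: distrib_left)
  qed
  ultimately show ?thesis by linarith
qed

lemma sum_lists_length_eq_sum_list:
  fixes g :: "'a \<Rightarrow> real"
  assumes "finite U"
  shows "(\<Sum>xs\<in>{xs. set xs \<subseteq> U \<and> length xs = n}. \<Sum>u\<leftarrow>xs. g u)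
         = real n * real (card U) ^ (n - 1) * (\<Sum>u\<in>U. g u)"
proof (induction n)
  case 0
  then show ?case by simp
next
  case (Suc n)
  let ?L = "{xs. set xs \<subseteq> U \<and> length xs = n}"
  have "(\<Sum>xs\<in>{xs. set xs \<subseteq> U \<and> length xs = Suc n}. \<Sum>u\<leftarrow>xs. g u)
      = (\<Sum>(xs, x)\<in>?L \<times> U. g x + (\<Sum>u\<leftarrow>xs. g u))"
    unfolding lists_length_Suc_eq by (subst sum.reindex) (auto simp: inj_on_def split_beta)
  also have "\<dots> = real (card ?L) * (\<Sum>x\<in>U. g x) + real (card U) * (\<Sum>xs\<in>?L. \<Sum>u\<leftarrow>xs. g u)"
    by (simp add: sum.cartesian_product[symmetric] sum.distrib sum_distrib_left)
  also have "\<dots> = real (Suc n) * real (card U) ^ (Suc n - 1) * (\<Sum>u\<in>U. g u)"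
    using Suc.IH card_lists_length_eq[OF assms, of n] by (cases n) (simp_all add: algebra_simps)
  finally show ?case .
qed

lemma average_lists_sum_list:
  fixes g :: "'a \<Rightarrow> real"
  assumes "finite U"
  shows "(\<Sum>xs\<in>{xs. set xs \<subseteq> U \<and> length xs = n}. \<Sum>u\<leftarrow>xs. g u) / real (card U) ^ n
         = real n * (\<Sum>u\<in>U. g u) / real (card U)"
proof (cases "n = 0 \<or> card U = 0")
  case False
  then have "real (card U) ^ n = real (card U) * real (card U) ^ (n - 1)"
    by (simp add: power_eq_if)
  then show ?thesis using False by (simp add: sum_lists_length_eq_sum_list[OF assms])
qed (auto simp: sum_lists_length_eq_sum_list[OF assms])

lemma average_lists_hitting:
  assumes "finite U" "U \<noteq> {}" "Q \<subseteq> U"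
  shows "(\<Sum>xs\<in>{xs. set xs \<subseteq> U \<and> length xs = n}. if set xs \<inter> Q \<noteq> {} then 1 else 0) / real (card U) ^ n
         = 1 - (1 - real (card Q) / real (card U)) ^ n"
proof -
  let ?L = "{xs. set xs \<subseteq> U \<and> length xs = n}"
  let ?M = "{xs. set xs \<subseteq> U - Q \<and> length xs = n}"
  define c q where "c = real (card U)" and "q = real (card Q)"
  have c: "c > 0" using assms by (simp add: c_def card_gt_0_iff)
  have "card Q \<le> card U" using assms by (simp add: card_mono)
  then have cardM: "real (card ?M) = (c - q) ^ n"
    using assms by (simp add: card_lists_length_eq card_Diff_subset finite_subset of_nat_diff c_def q_def)
  have "?L \<inter> {xs. set xs \<inter> Q = {}} = ?M" by auto
  have "(\<Sum>xs\<in>?L. if set xs \<inter> Q \<noteq> {} then 1 else 0 :: real)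
      = (\<Sum>xs\<in>?L. 1 - (if set xs \<inter> Q = {} then 1 else 0))"
    by (rule sum.cong) auto
  also have "\<dots> = real (card ?L) - real (card ?M)"
    using assms \<open>?L \<inter> {xs. set xs \<inter> Q = {}} = ?M\<close>
    by (simp add: sum_subtractf sum.If_cases finite_lists_length_eq)
  also have "\<dots> = c ^ n - (c - q) ^ n"
    by (simp only: cardM card_lists_length_eq[OF assms(1)] of_nat_power c_def)
  finally have sum_eq: "(\<Sum>xs\<in>?L. if set xs \<inter> Q \<noteq> {} then 1 else 0 :: real) = c ^ n - (c - q) ^ n" .
  have "(1 - q / c) ^ n = (c - q) ^ n / c ^ n"
    using c by (simp add: diff_divide_distrib power_divide[symmetric])
  then show ?thesis
    unfolding sum_eq using c by (simp add: diff_divide_distrib c_def q_def)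
qed

lemma dk_ge_dual:
  fixes d :: "'p \<Rightarrow> 'p \<Rightarrow> real"
  assumes "size A = size B"
    and "\<And>y z. y \<in># A \<Longrightarrow> z \<in># B \<Longrightarrow> c - g y - h z \<le> d y z"
  shows "real (size A) * c - (\<Sum>y\<in>#A. g y) - (\<Sum>z\<in>#B. h z) \<le> dk d A B"
  unfolding dk_def
proof (rule Min.boundedI)
  have "{sum_list (map2 d xs ys) |xs ys. mset xs = A \<and> mset ys = B}
      = (\<lambda>(xs, ys). sum_list (map2 d xs ys)) ` (permutations_of_multiset A \<times> permutations_of_multiset B)"
    by (auto simp: permutations_of_multiset_def)
  then show "finite {sum_list (map2 d xs ys) |xs ys. mset xs = A \<and> mset ys = B}"
    and "{sum_list (map2 d xs ys) |xs ys. mset xs = A \<and> mset ys = B} \<noteq> {}"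
    using permutations_of_multiset_not_empty by auto
next
  fix v assume "v \<in> {sum_list (map2 d xs ys) |xs ys. mset xs = A \<and> mset ys = B}"
  then obtain xs ys where v: "v = sum_list (map2 d xs ys)" and A: "A = mset xs" and B: "B = mset ys"
    by auto
  have len: "length xs = length ys" using assms(1) by (simp add: A B)
  have "real (size A) * c - (\<Sum>y\<in>#A. g y) - (\<Sum>z\<in>#B. h z) = (\<Sum>(y, z)\<leftarrow>zip xs ys. c - g y - h z)"
    using len unfolding A B sum_mset_sum_list mset_map[symmetric]
    by (induction xs ys rule: list_induct2) (simp_all add: algebra_simps)
  also have "\<dots> \<le> v"
    unfolding v using assms(2) by (intro sum_list_mono) (auto simp: A B dest: set_zip_leftD set_zip_rightD)
  finally show "real (size A) * c - (\<Sum>y\<in>#A. g y) - (\<Sum>z\<in>#B. h z) \<le> v" .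
qed

definition cover_count :: "(nat \<Rightarrow> nat set) \<Rightarrow> (nat \<Rightarrow> nat) \<Rightarrow> nat \<Rightarrow> nat \<Rightarrow> nat" where
  "cover_count S f l u = card {j. j < l \<and> u \<in> S (f j)}"

definition covered_once :: "(nat \<Rightarrow> nat set) \<Rightarrow> (nat \<Rightarrow> nat) \<Rightarrow> nat \<Rightarrow> nat \<Rightarrow> nat set" where
  "covered_once S f l N = {u. u < N \<and> cover_count S f l u = 1}"

definition covered_repeatedly :: "(nat \<Rightarrow> nat set) \<Rightarrow> (nat \<Rightarrow> nat) \<Rightarrow> nat \<Rightarrow> nat \<Rightarrow> nat set" where
  "covered_repeatedly S f l N = {u. u < N \<and> 2 \<le> cover_count S f l u}"

definition unique_part :: "(nat \<Rightarrow> nat set) \<Rightarrow> (nat \<Rightarrow> nat) \<Rightarrow> nat \<Rightarrow> nat \<Rightarrow> nat set" where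
  "unique_part S f l j = {u \<in> S (f j). cover_count S f l u = 1}"

lemma cover_count_pos:
  assumes "j < l" "u \<in> S (f j)"
  shows "cover_count S f l u \<ge> 1"
  using assms by (auto simp: cover_count_def Suc_le_eq card_gt_0_iff)

lemma sum_card_inter_eq_sum_cover_count:
  assumes "finite A"
  shows "(\<Sum>j<l. card (S (f j) \<inter> A)) = (\<Sum>u\<in>A. cover_count S f l u)"
proof -
  have "(\<Sum>u\<in>A. cover_count S f l u) = (\<Sum>u\<in>A. \<Sum>j\<in>{j \<in> {..<l}. u \<in> S (f j)}. 1)"
    by (simp add: cover_count_def)
  also have "\<dots> = (\<Sum>j<l. \<Sum>u\<in>{u \<in> A. u \<in> S (f j)}. 1)"
    using assms by (rule sum.swap_restrict) simp
  also have "\<dots> = (\<Sum>j<l. card (S (f j) \<inter> A))"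
    by (simp add: Int_def conj_commute)
  finally show ?thesis by simp
qed

lemma card_covered_once_plus_twice_repeatedly_le:
  assumes "\<forall>j<l. S (f j) \<subseteq> {..<N}"
  shows "card (covered_once S f l N) + 2 * card (covered_repeatedly S f l N) \<le> (\<Sum>j<l. card (S (f j)))"
proof -
  have "(\<Sum>j<l. card (S (f j))) = (\<Sum>u<N. cover_count S f l u)"
    using sum_card_inter_eq_sum_cover_count[where A="{..<N}" and l=l and S=S and f=f] assms
    by (simp add: Int_absorb2)
  also have "\<dots> \<ge> (\<Sum>u<N. (if cover_count S f l u = 1 then 1 else 0) + (if 2 \<le> cover_count S f l u then 2 else 0))"
    by (intro sum_mono) auto
  finally show ?thesis
    by (simp add: covered_once_def covered_repeatedly_def sum.distrib sum.If_cases lessThan_def Collect_conj_eq)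
qed

lemma card_covered_le_card_Union:
  assumes "\<forall>j<l. S (f j) \<subseteq> {..<N}"
  shows "card (covered_once S f l N) + card (covered_repeatedly S f l N) \<le> card (\<Union>j<l. S (f j))"
proof -
  have "covered_once S f l N \<union> covered_repeatedly S f l N \<subseteq> (\<Union>j<l. S (f j))"
  proof
    fix u assume "u \<in> covered_once S f l N \<union> covered_repeatedly S f l N"
    then have "cover_count S f l u \<noteq> 0" by (auto simp: covered_once_def covered_repeatedly_def)
    then have "{j. j < l \<and> u \<in> S (f j)} \<noteq> {}"
      unfolding cover_count_def by (metis card.empty)
    then show "u \<in> (\<Union>j<l. S (f j))" by blast
  qed
  moreover have "finite (\<Union>j<l. S (f j))"
    using assms by (auto intro: finite_subset)
  ultimately have "card (covered_once S f l N \<union> covered_repeatedly S f l N) \<le> card (\<Union>j<l. S (f j))"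
    by (rule card_mono[rotated])
  then show ?thesis
    by (simp add: card_Un_disjoint disjoint_iff covered_once_def covered_repeatedly_def)
qed

lemma sum_hit_probabilities_le:
  fixes \<epsilon> x\<^sub>0 :: real
  assumes "l dvd N" "\<forall>j<l. S (f j) \<subseteq> {..<N}" "\<forall>j<l. card (S (f j)) = N div l"
    and "exp (-1) - (1 - 1 / l) ^ l \<le> \<epsilon>"
  shows "(\<Sum>j<l. 1 - (1 - real (card (unique_part S f l j)) / real N) ^ l)
         \<le> real l * (1 - exp (-x\<^sub>0) * (1 + x\<^sub>0) + \<epsilon>
             + exp (-x\<^sub>0) * real (card (covered_once S f l N)) / real N)"
proof -
  let ?q = "\<lambda>j. real (card (unique_part S f l j))"
  have "1 - (1 - ?q j / N) ^ l \<le> (1 - exp (-x\<^sub>0) * (1 + x\<^sub>0) + \<epsilon>) + exp (-x\<^sub>0) * real l / N * ?q j"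
    if "j < l" for j
  proof -
    have "card (unique_part S f l j) \<le> card (S (f j))"
      using assms(2) that by (intro card_mono) (auto simp: unique_part_def intro: finite_subset)
    then have "real l * ?q j \<le> real N"
      using assms(1,3) that by (metis dvd_mult_div_cancel mult_le_mono2 of_nat_le_iff of_nat_mult)
    moreover have "l > 0" using that by simp
    ultimately have "1 - (1 - real l * ?q j / N / l) ^ l \<le> 1 - exp (-x\<^sub>0) * (1 + x\<^sub>0 - real l * ?q j / N) + \<epsilon>"
      using assms(4) by (intro one_minus_power_le_tangent) (auto simp: divide_le_eq_1)
    then show ?thesis using \<open>l > 0\<close> by (simp add: algebra_simps)
  qed
  then have "(\<Sum>j<l. 1 - (1 - ?q j / N) ^ l)
      \<le> (\<Sum>j<l. (1 - exp (-x\<^sub>0) * (1 + x\<^sub>0) + \<epsilon>) + exp (-x\<^sub>0) * real l / N * ?q j)"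
    by (intro sum_mono) simp
  also have "\<dots> = real l * (1 - exp (-x\<^sub>0) * (1 + x\<^sub>0) + \<epsilon>) + exp (-x\<^sub>0) * real l / N * (\<Sum>j<l. ?q j)"
    by (simp add: sum.distrib sum_distrib_left)
  also have "(\<Sum>j<l. ?q j) = real (card (covered_once S f l N))"
  proof -
    have "unique_part S f l j = S (f j) \<inter> covered_once S f l N" if "j < l" for j
      using assms(2) that by (auto simp: unique_part_def covered_once_def)
    moreover have "finite (covered_once S f l N)"
      unfolding covered_once_def by (rule finite_subset[of _ "{..<N}"]) auto
    ultimately have "(\<Sum>j<l. card (unique_part S f l j)) = (\<Sum>u\<in>covered_once S f l N. cover_count S f l u)"
      by (simp add: sum_card_inter_eq_sum_cover_count)
    then show ?thesis by (simp add: covered_once_def flip: of_nat_sum)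
  qed
  finally show ?thesis by (simp add: algebra_simps)
qed

lemma dk_chosen_sets_ge:
  fixes \<epsilon> :: real
  assumes "\<epsilon> \<le> 1" "length xs = l"
  shows "real l * (2 - \<epsilon>)
           - (1 - \<epsilon>) * (\<Sum>j<l. if set xs \<inter> unique_part S f l j \<noteq> {} then 1 else 0)
           - (1 - \<epsilon>) * (\<Sum>u\<leftarrow>xs. if 2 \<le> cover_count S f l u then 1 else 0)
         \<le> dk (rp_dist S \<epsilon>) (mset (map (\<lambda>j. SetP (f j)) [0..<l])) (mset (map Elem xs))"
proof -
  let ?K = "mset (map (\<lambda>j. SetP (f j)) [0..<l])"
  \<comment> \<open>The saving 1 - eps of a pair (S i, u) with u in S i is charged to u if u is covered
    at least twice, and otherwise to S i, whose unique part then meets xs.\<close>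
  define g where "g y = (case y of
      SetP i \<Rightarrow> if set xs \<inter> {u \<in> S i. cover_count S f l u = 1} \<noteq> {} then 1 - \<epsilon> else 0
    | Elem u \<Rightarrow> 0)" for y
  define h where "h z = (case z of
      Elem u \<Rightarrow> if 2 \<le> cover_count S f l u then 1 - \<epsilon> else 0
    | SetP i \<Rightarrow> 0)" for z
  have "real (size ?K) * (2 - \<epsilon>)
          - (\<Sum>y\<in>#?K. g y) - (\<Sum>z\<in>#mset (map Elem xs). h z)
        \<le> dk (rp_dist S \<epsilon>) ?K (mset (map Elem xs))"
  proof (rule dk_ge_dual)
    fix y z
    assume "y \<in># ?K" "z \<in># mset (map Elem xs)"
    then obtain j u where j: "j < l" "y = SetP (f j)" and u: "u \<in> set xs" "z = Elem u"
      by auto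
    show "2 - \<epsilon> - g y - h z \<le> rp_dist S \<epsilon> y z"
    proof (cases "u \<in> S (f j)")
      case True
      then have "cover_count S f l u = 1 \<or> 2 \<le> cover_count S f l u"
        using cover_count_pos[OF j(1)] by fastforce
      then show ?thesis using True j u assms(1) by (auto simp: g_def h_def)
    qed (use j u assms(1) in \<open>auto simp: g_def h_def\<close>)
  qed (simp add: assms(2))
  moreover have "(\<Sum>y\<in>#?K. g y)
      = (1 - \<epsilon>) * (\<Sum>j<l. if set xs \<inter> unique_part S f l j \<noteq> {} then 1 else 0)"
  proof -
    have "(\<Sum>y\<in>#?K. g y) = (\<Sum>j<l. g (SetP (f j)))"
      by (simp add: sum_unfold_sum_mset multiset.map_comp atLeast0LessThan o_def)
    then show ?thesis
      by (simp add: g_def unique_part_def sum_distrib_left Int_def) (auto intro!: sum.cong)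
  qed
  moreover have "(\<Sum>z\<in>#mset (map Elem xs). h z)
      = (1 - \<epsilon>) * (\<Sum>u\<leftarrow>xs. if 2 \<le> cover_count S f l u then 1 else 0)"
    by (induction xs) (simp_all add: h_def algebra_simps)
  ultimately show ?thesis using assms(2) by simp
qed

lemma rp_cost_chosen_sets_ge:
  fixes \<epsilon> :: real
  assumes "N > 0" "\<epsilon> \<le> 1" "\<forall>j<l. S (f j) \<subseteq> {..<N}"
  shows "real l * (2 - \<epsilon>)
           - (1 - \<epsilon>) * (\<Sum>j<l. 1 - (1 - real (card (unique_part S f l j)) / real N) ^ l)
           - (1 - \<epsilon>) * (real l * real (card (covered_repeatedly S f l N)) / real N)
         \<le> rp_cost S \<epsilon> N l (mset (map (\<lambda>j. SetP (f j)) [0..<l]))"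
proof -
  let ?Ls = "{xs. set xs \<subseteq> {..<N} \<and> length xs = l}"
  define hit where "hit j xs = (if set xs \<inter> unique_part S f l j \<noteq> {} then 1 else 0 :: real)" for j xs
  define multi where "multi u = (if 2 \<le> cover_count S f l u then 1 else 0 :: real)" for u
  have N: "real N ^ l > 0" "card ?Ls = N ^ l"
    using assms(1) by (simp_all add: card_lists_length_eq)
  have "(\<Sum>xs\<in>?Ls. hit j xs) / real N ^ l = 1 - (1 - real (card (unique_part S f l j)) / real N) ^ l"
    if "j < l" for j
    using average_lists_hitting[where U="{..<N}" and Q="unique_part S f l j" and n=l] assms(1,3) that
    by (auto simp: hit_def unique_part_def)
  then have avg_hit: "(\<Sum>xs\<in>?Ls. \<Sum>j<l. hit j xs) / real N ^ l
      = (\<Sum>j<l. 1 - (1 - real (card (unique_part S f l j)) / real N) ^ l)"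
    by (simp add: sum.swap[where B="{..<l}"] sum_divide_distrib)
  have avg_multi: "(\<Sum>xs\<in>?Ls. \<Sum>u\<leftarrow>xs. multi u) / real N ^ l
      = real l * real (card (covered_repeatedly S f l N)) / real N"
    using average_lists_sum_list[where U="{..<N}" and n=l and g=multi]
    by (simp add: multi_def covered_repeatedly_def sum.If_cases lessThan_def Collect_conj_eq)
  define lower where "lower xs = real l * (2 - \<epsilon>) - (1 - \<epsilon>) * (\<Sum>j<l. hit j xs)
    - (1 - \<epsilon>) * (\<Sum>u\<leftarrow>xs. multi u)" for xs
  have "(\<Sum>xs\<in>?Ls. lower xs) / real N ^ l \<le> rp_cost S \<epsilon> N l (mset (map (\<lambda>j. SetP (f j)) [0..<l]))"
    unfolding rp_cost_def lower_def hit_def multi_def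
    using N assms(2) by (intro divide_right_mono sum_mono dk_chosen_sets_ge) auto
  moreover have "(\<Sum>xs\<in>?Ls. lower xs) / real N ^ l
      = (real N ^ l * (real l * (2 - \<epsilon>)) - (1 - \<epsilon>) * (\<Sum>xs\<in>?Ls. \<Sum>j<l. hit j xs)
        - (1 - \<epsilon>) * (\<Sum>xs\<in>?Ls. \<Sum>u\<leftarrow>xs. multi u)) / real N ^ l"
    using N by (simp add: lower_def sum_subtractf sum_distrib_left)
  moreover have "\<dots> = real l * (2 - \<epsilon>)
        - (1 - \<epsilon>) * (\<Sum>j<l. 1 - (1 - real (card (unique_part S f l j)) / real N) ^ l)
        - (1 - \<epsilon>) * (real l * real (card (covered_repeatedly S f l N)) / real N)"
    using N(1) by (simp add: diff_divide_distrib flip: avg_hit avg_multi)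
  ultimately show ?thesis by simp
qed

lemma obtain_set_point_indices:
  assumes "size K = l" "\<forall>x\<in>#K. \<exists>i<m. x = SetP i"
  obtains f where "\<forall>j<l. f j < m" "K = mset (map (\<lambda>j. SetP (f j)) [0..<l])"
proof -
  obtain ks where ks: "mset ks = K" using ex_mset by blast
  define f where "f j = (case ks ! j of SetP i \<Rightarrow> i | Elem u \<Rightarrow> 0)" for j
  have "length ks = l" using ks assms(1) by auto
  have f: "f j < m \<and> ks ! j = SetP (f j)" if "j < l" for j
  proof -
    have "ks ! j \<in># K" using that ks \<open>length ks = l\<close> by (metis nth_mem set_mset_mset)
    then show ?thesis using assms(2) by (auto simp: f_def)
  qed
  then have "ks = map (\<lambda>j. SetP (f j)) [0..<l]"
    using \<open>length ks = l\<close> by (intro nth_equalityI) auto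
  then show ?thesis using that f ks by blast
qed

theorem lemma4:
  fixes N l m :: nat and S :: "nat \<Rightarrow> nat set" and \<epsilon> :: real
  assumes N_pos: "N > 0"
    and l_pos: "l > 0"
    and l_dvd: "l dvd N"
    and S_sub: "\<forall>i<m. S i \<subseteq> {..<N}"
    and S_card: "\<forall>i<m. card (S i) = N div l"
    and eps_pos: "\<epsilon> > 0"
    and eps_le: "\<epsilon> \<le> 0.06"
    and eps_ge: "\<epsilon> \<ge> exp (-1) - (1 - 1 / real l) ^ l"
    and partial_cover: "\<forall>f. (\<forall>j<l. f j < m) \<longrightarrow>
            real (card (\<Union>j<l. S (f j))) \<le> (1 - exp (-1) + \<epsilon>) * real N"
  shows "\<forall>K. size K = l \<and> (\<forall>x\<in>#K. \<exists>i<m. x = SetP i) \<longrightarrow>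
           rp_cost S \<epsilon> N l K \<ge>
             real l * (1 + exp (-1 + 2 / exp 1) - exp (-1) - 3 * (1 + 1 / exp 1) * \<epsilon>)"
proof (intro allI impI)
  fix K assume "size K = l \<and> (\<forall>x\<in>#K. \<exists>i<m. x = SetP i)"
  then obtain f where f: "\<forall>j<l. f j < m" and K: "K = mset (map (\<lambda>j. SetP (f j)) [0..<l])"
    using obtain_set_point_indices[of K l m] by blast
  have Sf: "\<forall>j<l. S (f j) \<subseteq> {..<N}" "\<forall>j<l. card (S (f j)) = N div l"
    using f S_sub S_card by auto
  define p d where "p = card (covered_once S f l N) / N" and "d = card (covered_repeatedly S f l N) / N"
  define x\<^sub>0 where "x\<^sub>0 = 1 - 2 * exp (-1) + 2 * \<epsilon>"
  have "p + 2 * d \<le> 1"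
    using card_covered_once_plus_twice_repeatedly_le[where S=S and f=f, OF Sf(1)] Sf(2) l_dvd N_pos
    by (simp add: p_def d_def field_simps)
  moreover have "p + d \<le> 1 - exp (-1) + \<epsilon>"
    using card_covered_le_card_Union[where S=S and f=f, OF Sf(1)] partial_cover f N_pos
    by (auto simp: p_def d_def field_simps)
  moreover have "(\<Sum>j<l. 1 - (1 - real (card (unique_part S f l j)) / real N) ^ l)
      \<le> real l * (1 - exp (-x\<^sub>0) * (1 + x\<^sub>0) + \<epsilon> + exp (-x\<^sub>0) * p)"
    using sum_hit_probabilities_le[where S=S and f=f, OF l_dvd Sf eps_ge, of x\<^sub>0]
    by (simp add: p_def)
  ultimately have "real l * (1 + exp (-1 + 2 / exp 1) - exp (-1) - 3 * (1 + 1 / exp 1) * \<epsilon>)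
      \<le> real l * (2 - \<epsilon>) - (1 - \<epsilon>) * (\<Sum>j<l. 1 - (1 - real (card (unique_part S f l j)) / real N) ^ l)
        - (1 - \<epsilon>) * (real l * d)"
    using eps_pos eps_le unfolding x\<^sub>0_def by (intro cost_bound_from_coverage) auto
  also have "\<dots> \<le> rp_cost S \<epsilon> N l K"
    using rp_cost_chosen_sets_ge[where S=S and f=f and \<epsilon>=\<epsilon>, OF N_pos _ Sf(1)] eps_le
    unfolding K d_def by simp
  finally show "rp_cost S \<epsilon> N l K \<ge> real l * (1 + exp (-1 + 2 / exp 1) - exp (-1) - 3 * (1 + 1 / exp 1) * \<epsilon>)" .
qed

end
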